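(* Let $g_1:\mathcal W\to[\epsilon_1,1]$ (for some $\epsilon_1>0$) and $m_1:\mathcal W\to[0,1]$ be measurable functions such that either $g_1=g$ or $m_1=m$ ($P$-almost surely). Define \[ r_1(w)=E_P\big\{Y-m_1(W)\mid A=1,\ g_1(W)=g_1(w)\big\},\qquad e_1(w)=E_P\big\{g_1(W)\mid r_1(W)=r_1(w)\big\}\] (the $e$-score), and let $\lambda_1=(e_1,m_1)$. Then $P D_{\lambda_1,\theta}=E_P\{D_{\lambda_1,\theta}(O)\}=0$.
   Context: Let $O=(W,A,Y)$ be a random vector with distribution $P$, where $W$ takes values in a measurable space $\mathcal W$, $A\in\{0,1\}$, and $Y\in[0,1]$. Let $g(w)=P(A=1\mid W=w)$ (propensity score), $m(w)=E_P(Y\mid A=1,W=w)$ (outcome regression), and $\theta=E_P\{m(W)\}$. Strong positivity is assumed: there is $\epsilon>0$ with $P\{g(W)>\epsilon\}=1$. For a measurable $e:\mathcal W\to(0,1]$ bounded away from $0$ and a measurable $m':\mathcal W\to\mathbb R$, write $\lambda=(e,m')$ and \[ D_{\lambda,\theta}(O)=\frac{A}{e(W)}\{Y-m'(W)\}+m'(W)-\theta .\] For a function $f$ of $O$, $Pf=\int f\,dP$. *)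

theory Defs
  imports "HOL-Probability.Probability"
begin

definition regr :: "'a measure \<Rightarrow> ('a \<Rightarrow> 'b) \<Rightarrow> 'b measure \<Rightarrow> ('a \<Rightarrow> real) \<Rightarrow> ('b \<Rightarrow> real) \<Rightarrow> bool" where
  "regr M X N Z f \<longleftrightarrow> f \<in> borel_measurable N \<and>
     (AE \<omega> in M. f (X \<omega>) = real_cond_exp M (vimage_algebra (space M) X N) Z \<omega>)"

end

theory Submission
  imports Defs
begin

text \<open>If \<open>m1 = m\<close>, the residual \<open>Y - m1(W)\<close> has conditional mean zero given \<open>A = 1\<close> and \<open>W\<close>,
  while the weight \<open>1/e1\<close> is a function of \<open>W\<close>; so the correction term vanishes and
  \<open>E m1(W) = \<theta>\<close>. If \<open>g1 = g\<close>, conditioning first on \<open>A = 1\<close> and \<open>g1(W)\<close> and then on \<open>W\<close> turns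
  \<open>E[A (Y - m1(W)) \<psi>(g1(W))]\<close> into \<open>E[g1(W) r1(W) \<psi>(g1(W))]\<close> for every bounded \<open>\<psi>\<close>. For
  \<open>\<psi> = 1/e1\<close> a further conditioning on \<open>r1(W)\<close>, which replaces \<open>g1\<close> by \<open>e1\<close>, gives \<open>E r1(W)\<close>;
  for \<open>\<psi> = 1/g1\<close> one gets \<open>E r1(W)\<close> directly. So the e-score weighted correction equals the
  inverse-propensity weighted one, and the latter is \<open>\<theta> - E m1(W)\<close>.\<close>

lemma regr_measurable: "regr M X N Z f \<Longrightarrow> f \<in> borel_measurable N"
  by (simp add: regr_def)

context finite_measure
begin

lemma regr_integral_mult:
  fixes Z :: "'a \<Rightarrow> real" and \<phi> :: "'b \<Rightarrow> real"
  assumes X[measurable]: "X \<in> measurable M N" and f: "regr M X N Z f"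
    and Z[measurable]: "Z \<in> borel_measurable M" and [measurable]: "\<phi> \<in> borel_measurable N"
    and int: "integrable M (\<lambda>\<omega>. Z \<omega> * \<phi> (X \<omega>))"
  shows "integrable M (\<lambda>\<omega>. f (X \<omega>) * \<phi> (X \<omega>))"
    and "(\<integral>\<omega>. Z \<omega> * \<phi> (X \<omega>) \<partial>M) = (\<integral>\<omega>. f (X \<omega>) * \<phi> (X \<omega>) \<partial>M)"
proof -
  have [measurable]: "f \<in> borel_measurable N"
    using f by (rule regr_measurable)
  define F where "F = vimage_algebra (space M) X N"
  interpret finite_measure_subalgebra M F
    by unfold_locales (use sets_image_in_sets[of M "space M" X N] in \<open>auto simp: subalgebra_def F_def\<close>)
  have \<phi>F: "(\<lambda>\<omega>. \<phi> (X \<omega>)) \<in> borel_measurable F"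
    unfolding F_def by (intro measurable_compose[OF measurable_vimage_algebra1]) (use measurable_space[OF X] in auto)
  have ae: "AE \<omega> in M. f (X \<omega>) * \<phi> (X \<omega>) = \<phi> (X \<omega>) * real_cond_exp M F Z \<omega>"
    using f unfolding regr_def F_def by (auto elim: AE_mp)
  have int': "integrable M (\<lambda>\<omega>. \<phi> (X \<omega>) * Z \<omega>)"
    using int by (simp add: mult.commute)
  note tower = real_cond_exp_intg[OF int' \<phi>F Z]
  show "integrable M (\<lambda>\<omega>. f (X \<omega>) * \<phi> (X \<omega>))"
    by (rule integrable_cong_AE_imp[OF tower(1)]) (use ae in \<open>auto elim: AE_mp\<close>)
  have "(\<integral>\<omega>. f (X \<omega>) * \<phi> (X \<omega>) \<partial>M) = (\<integral>\<omega>. \<phi> (X \<omega>) * real_cond_exp M F Z \<omega> \<partial>M)"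
    using ae by (rule integral_cong_AE[rotated 2]) simp_all
  then show "(\<integral>\<omega>. Z \<omega> * \<phi> (X \<omega>) \<partial>M) = (\<integral>\<omega>. f (X \<omega>) * \<phi> (X \<omega>) \<partial>M)"
    using tower(2) by (simp add: mult.commute)
qed

lemma regr_AE_bounds:
  fixes Z :: "'a \<Rightarrow> real"
  assumes X[measurable]: "X \<in> measurable M N" and f: "regr M X N Z f"
    and [measurable]: "Z \<in> borel_measurable M" and bounds: "AE \<omega> in M. a \<le> Z \<omega> \<and> Z \<omega> \<le> b"
  shows "AE \<omega> in M. a \<le> f (X \<omega>) \<and> f (X \<omega>) \<le> b"
proof -
  define F where "F = vimage_algebra (space M) X N"
  interpret finite_measure_subalgebra M F
    by unfold_locales (use sets_image_in_sets[of M "space M" X N] in \<open>auto simp: subalgebra_def F_def\<close>)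
  have Z_int: "integrable M Z"
    by (rule integrable_const_bound[where B="\<bar>a\<bar> + \<bar>b\<bar>"]) (use bounds in \<open>auto elim: AE_mp\<close>)
  have "AE \<omega> in M. a \<le> real_cond_exp M F Z \<omega>"
    by (rule real_cond_exp_ge_c[OF Z_int]) (use bounds in auto)
  moreover have "AE \<omega> in M. real_cond_exp M F Z \<omega> \<le> b"
    by (rule real_cond_exp_le_c[OF Z_int]) (use bounds in auto)
  ultimately show ?thesis
    using f unfolding regr_def F_def by (auto elim: AE_mp)
qed

end

locale treatment_model = prob_space M for M :: "'o measure" +
  fixes Mw :: "'w measure" and W :: "'o \<Rightarrow> 'w" and A Y :: "'o \<Rightarrow> real" and g m :: "'w \<Rightarrow> real"
  assumes W_measurable[measurable]: "W \<in> measurable M Mw"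
    and A_measurable[measurable]: "A \<in> borel_measurable M"
    and A_01: "\<forall>\<omega>\<in>space M. A \<omega> \<in> {0, 1}"
    and Y_measurable[measurable]: "Y \<in> borel_measurable M"
    and Y_bounds: "\<forall>\<omega>\<in>space M. 0 \<le> Y \<omega> \<and> Y \<omega> \<le> 1"
    and propensity: "regr M W Mw A g"
    and outcome: "regr (restrict_space M {\<omega>\<in>space M. A \<omega> = 1}) W Mw Y m"
begin

abbreviation treated :: "'o set" where
  "treated \<equiv> {\<omega>\<in>space M. A \<omega> = 1}"

lemma sets_treated_Int_space: "treated \<inter> space M \<in> sets M"
  by simp

lemma integral_treated:
  fixes f :: "'o \<Rightarrow> real"
  shows "(\<integral>\<omega>. f \<omega> \<partial>restrict_space M treated) = (\<integral>\<omega>. A \<omega> * f \<omega> \<partial>M)"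
  unfolding integral_restrict_space[OF sets_treated_Int_space]
  by (rule Bochner_Integration.integral_cong[OF refl]) (use A_01 in \<open>auto simp: indicator_def\<close>)

lemma integrable_treated:
  fixes f :: "'o \<Rightarrow> real"
  shows "integrable (restrict_space M treated) f \<longleftrightarrow> integrable M (\<lambda>\<omega>. A \<omega> * f \<omega>)"
  unfolding integrable_restrict_space[OF sets_treated_Int_space]
  by (rule Bochner_Integration.integrable_cong) (use A_01 in \<open>auto simp: indicator_def\<close>)

lemma regr_treated_integral_mult:
  fixes Z :: "'o \<Rightarrow> real" and \<phi> :: "'b \<Rightarrow> real"
  assumes X: "X \<in> measurable M N" and f: "regr (restrict_space M treated) X N Z f"
    and Z: "Z \<in> borel_measurable M" and \<phi>: "\<phi> \<in> borel_measurable N"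
    and int: "integrable M (\<lambda>\<omega>. A \<omega> * (Z \<omega> * \<phi> (X \<omega>)))"
  shows "integrable M (\<lambda>\<omega>. A \<omega> * (f (X \<omega>) * \<phi> (X \<omega>)))"
    and "(\<integral>\<omega>. A \<omega> * (Z \<omega> * \<phi> (X \<omega>)) \<partial>M) = (\<integral>\<omega>. A \<omega> * (f (X \<omega>) * \<phi> (X \<omega>)) \<partial>M)"
proof -
  interpret treated: finite_measure "restrict_space M treated"
    by (rule finite_measure_restrict_space) simp_all
  note tower = treated.regr_integral_mult[OF measurable_restrict_space1[OF X] f
      measurable_restrict_space1[OF Z] \<phi>]
  show "integrable M (\<lambda>\<omega>. A \<omega> * (f (X \<omega>) * \<phi> (X \<omega>)))"
    using tower(1) int by (simp add: integrable_treated)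
  show "(\<integral>\<omega>. A \<omega> * (Z \<omega> * \<phi> (X \<omega>)) \<partial>M) = (\<integral>\<omega>. A \<omega> * (f (X \<omega>) * \<phi> (X \<omega>)) \<partial>M)"
    using tower(2) int by (simp add: integrable_treated integral_treated)
qed

lemma propensity_measurable[measurable]: "g \<in> borel_measurable Mw"
  using propensity by (rule regr_measurable)

lemma outcome_measurable[measurable]: "m \<in> borel_measurable Mw"
  using outcome by (rule regr_measurable)

lemma integrable_treated_weighted:
  fixes Z :: "'o \<Rightarrow> real" and \<phi> :: "'w \<Rightarrow> real"
  assumes [measurable]: "Z \<in> borel_measurable M" "\<phi> \<in> borel_measurable Mw"
    and Z_bound: "\<forall>\<omega>\<in>space M. \<bar>Z \<omega>\<bar> \<le> 1" and \<phi>_bound: "AE \<omega> in M. \<bar>\<phi> (W \<omega>)\<bar> \<le> B"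
  shows "integrable M (\<lambda>\<omega>. A \<omega> * (Z \<omega> * \<phi> (W \<omega>)))"
proof (rule integrable_const_bound[where B=B])
  show "AE \<omega> in M. norm (A \<omega> * (Z \<omega> * \<phi> (W \<omega>))) \<le> B"
    using \<phi>_bound AE_space
  proof eventually_elim
    case (elim \<omega>)
    then have "\<bar>A \<omega>\<bar> \<le> 1" "\<bar>Z \<omega>\<bar> \<le> 1"
      using A_01 Z_bound by auto
    then have "\<bar>A \<omega>\<bar> * (\<bar>Z \<omega>\<bar> * \<bar>\<phi> (W \<omega>)\<bar>) \<le> \<bar>\<phi> (W \<omega>)\<bar>"
      by (meson abs_ge_zero mult_left_le_one_le mult_nonneg_nonneg order_trans)
    with elim(1) show ?case
      by (simp add: abs_mult)
  qed
qed measurable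

end

locale e_score_model = treatment_model +
  fixes g1 m1 :: "'w \<Rightarrow> real" and h k :: "real \<Rightarrow> real" and \<epsilon>1 :: real
  assumes g1_measurable[measurable]: "g1 \<in> borel_measurable Mw"
    and \<epsilon>1_pos: "\<epsilon>1 > 0" and g1_bounds: "\<forall>w\<in>space Mw. \<epsilon>1 \<le> g1 w \<and> g1 w \<le> 1"
    and m1_measurable[measurable]: "m1 \<in> borel_measurable Mw"
    and m1_bounds: "\<forall>w\<in>space Mw. 0 \<le> m1 w \<and> m1 w \<le> 1"
    and residual_regr: "regr (restrict_space M {\<omega>\<in>space M. A \<omega> = 1}) (\<lambda>\<omega>. g1 (W \<omega>)) borel
      (\<lambda>\<omega>. Y \<omega> - m1 (W \<omega>)) h"
    and e_score_regr: "regr M (\<lambda>\<omega>. h (g1 (W \<omega>))) borel (\<lambda>\<omega>. g1 (W \<omega>)) k"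
begin

lemma residual_measurable[measurable]: "h \<in> borel_measurable borel"
  using residual_regr by (rule regr_measurable)

lemma e_score_measurable[measurable]: "k \<in> borel_measurable borel"
  using e_score_regr by (rule regr_measurable)

lemma g1_W_bounds: "\<omega> \<in> space M \<Longrightarrow> \<epsilon>1 \<le> g1 (W \<omega>) \<and> g1 (W \<omega>) \<le> 1"
  using g1_bounds measurable_space[OF W_measurable] by blast

lemma m1_W_bounds: "\<omega> \<in> space M \<Longrightarrow> 0 \<le> m1 (W \<omega>) \<and> m1 (W \<omega>) \<le> 1"
  using m1_bounds measurable_space[OF W_measurable] by blast

lemma e_score_lower_bound: "AE \<omega> in M. \<epsilon>1 \<le> k (h (g1 (W \<omega>)))"
proof -
  have "AE \<omega> in M. \<epsilon>1 \<le> k (h (g1 (W \<omega>))) \<and> k (h (g1 (W \<omega>))) \<le> 1"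
    by (rule regr_AE_bounds[OF _ e_score_regr]) (use g1_W_bounds in auto)
  then show ?thesis
    by eventually_elim simp
qed


lemma residual_abs_le_1: "\<forall>\<omega>\<in>space M. \<bar>Y \<omega> - m1 (W \<omega>)\<bar> \<le> 1"
  using Y_bounds m1_W_bounds by fastforce

lemma residual_integral_mult:
  fixes \<psi> :: "real \<Rightarrow> real"
  assumes g1_eq_g: "AE \<omega> in M. g1 (W \<omega>) = g (W \<omega>)"
    and [measurable]: "\<psi> \<in> borel_measurable borel" and \<psi>_bound: "AE \<omega> in M. \<bar>\<psi> (g1 (W \<omega>))\<bar> \<le> B"
  shows "integrable M (\<lambda>\<omega>. g1 (W \<omega>) * (h (g1 (W \<omega>)) * \<psi> (g1 (W \<omega>))))"
    and "(\<integral>\<omega>. A \<omega> * ((Y \<omega> - m1 (W \<omega>)) * \<psi> (g1 (W \<omega>))) \<partial>M)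
       = (\<integral>\<omega>. g1 (W \<omega>) * (h (g1 (W \<omega>)) * \<psi> (g1 (W \<omega>))) \<partial>M)"
proof -
  have "integrable M (\<lambda>\<omega>. A \<omega> * ((Y \<omega> - m1 (W \<omega>)) * \<psi> (g1 (W \<omega>))))"
    using integrable_treated_weighted[where \<phi>="\<lambda>w. \<psi> (g1 w)"] \<psi>_bound residual_abs_le_1 by simp
  note treated_step = regr_treated_integral_mult[OF _ residual_regr _ _ this]
  note propensity_step = regr_integral_mult[OF W_measurable propensity A_measurable,
      where \<phi>="\<lambda>w. h (g1 w) * \<psi> (g1 w)", OF _ treated_step(1)]
  have g_to_g1: "AE \<omega> in M. g (W \<omega>) * (h (g1 (W \<omega>)) * \<psi> (g1 (W \<omega>)))
      = g1 (W \<omega>) * (h (g1 (W \<omega>)) * \<psi> (g1 (W \<omega>)))"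
    using g1_eq_g by eventually_elim simp
  show "integrable M (\<lambda>\<omega>. g1 (W \<omega>) * (h (g1 (W \<omega>)) * \<psi> (g1 (W \<omega>))))"
    by (rule integrable_cong_AE_imp[OF propensity_step(1) _ g_to_g1]) measurable
  have "(\<integral>\<omega>. A \<omega> * ((Y \<omega> - m1 (W \<omega>)) * \<psi> (g1 (W \<omega>))) \<partial>M)
      = (\<integral>\<omega>. g (W \<omega>) * (h (g1 (W \<omega>)) * \<psi> (g1 (W \<omega>))) \<partial>M)"
    using treated_step(2) propensity_step(2) by simp
  also have "\<dots> = (\<integral>\<omega>. g1 (W \<omega>) * (h (g1 (W \<omega>)) * \<psi> (g1 (W \<omega>))) \<partial>M)"
    by (rule integral_cong_AE[OF _ _ g_to_g1]) measurable
  finally show "(\<integral>\<omega>. A \<omega> * ((Y \<omega> - m1 (W \<omega>)) * \<psi> (g1 (W \<omega>))) \<partial>M)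
      = (\<integral>\<omega>. g1 (W \<omega>) * (h (g1 (W \<omega>)) * \<psi> (g1 (W \<omega>))) \<partial>M)" .
qed

lemma inverse_e_score_bound: "AE \<omega> in M. \<bar>1 / k (h (g1 (W \<omega>)))\<bar> \<le> 1 / \<epsilon>1"
  using e_score_lower_bound by eventually_elim (use \<epsilon>1_pos in \<open>simp add: frac_le\<close>)

lemma inverse_g1_bound: "AE \<omega> in M. \<bar>1 / g1 (W \<omega>)\<bar> \<le> 1 / \<epsilon>1"
  using AE_space by eventually_elim (use g1_W_bounds \<epsilon>1_pos in \<open>force simp: frac_le\<close>)

lemma e_score_weighted_residual:
  assumes g1_eq_g: "AE \<omega> in M. g1 (W \<omega>) = g (W \<omega>)"
  shows "(\<integral>\<omega>. A \<omega> * ((Y \<omega> - m1 (W \<omega>)) * (1 / k (h (g1 (W \<omega>))))) \<partial>M) = (\<integral>\<omega>. h (g1 (W \<omega>)) \<partial>M)"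
proof -
  note residual_step = residual_integral_mult[OF g1_eq_g, where \<psi>="\<lambda>t. 1 / k (h t)", OF _ inverse_e_score_bound]
  have "integrable M (\<lambda>\<omega>. g1 (W \<omega>) * (h (g1 (W \<omega>)) / k (h (g1 (W \<omega>)))))"
    using residual_step(1) by simp
  note e_score_step = regr_integral_mult[OF _ e_score_regr, where \<phi>="\<lambda>s. s / k s", OF _ _ _ this]
  have "(\<integral>\<omega>. A \<omega> * ((Y \<omega> - m1 (W \<omega>)) * (1 / k (h (g1 (W \<omega>))))) \<partial>M)
      = (\<integral>\<omega>. k (h (g1 (W \<omega>))) * (h (g1 (W \<omega>)) / k (h (g1 (W \<omega>)))) \<partial>M)"
    using residual_step(2) e_score_step(2) by simp
  also have "\<dots> = (\<integral>\<omega>. h (g1 (W \<omega>)) \<partial>M)"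
    by (rule integral_cong_AE) (use e_score_lower_bound \<epsilon>1_pos in \<open>auto elim!: AE_mp\<close>)
  finally show ?thesis .
qed

lemma ipw_weighted_residual:
  assumes g1_eq_g: "AE \<omega> in M. g1 (W \<omega>) = g (W \<omega>)"
  shows "(\<integral>\<omega>. A \<omega> * ((Y \<omega> - m1 (W \<omega>)) * (1 / g1 (W \<omega>))) \<partial>M) = (\<integral>\<omega>. h (g1 (W \<omega>)) \<partial>M)"
proof -
  have "(\<integral>\<omega>. A \<omega> * ((Y \<omega> - m1 (W \<omega>)) * (1 / g1 (W \<omega>))) \<partial>M)
      = (\<integral>\<omega>. g1 (W \<omega>) * (h (g1 (W \<omega>)) * (1 / g1 (W \<omega>))) \<partial>M)"
    using residual_integral_mult(2)[OF g1_eq_g, where \<psi>="\<lambda>t. 1 / t", OF _ inverse_g1_bound] by simp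
  also have "\<dots> = (\<integral>\<omega>. h (g1 (W \<omega>)) \<partial>M)"
    by (rule Bochner_Integration.integral_cong[OF refl]) (use g1_W_bounds \<epsilon>1_pos in force)
  finally show ?thesis .
qed

lemma ipw_integral:
  fixes \<phi> :: "'w \<Rightarrow> real"
  assumes g1_eq_g: "AE \<omega> in M. g1 (W \<omega>) = g (W \<omega>)" and [measurable]: "\<phi> \<in> borel_measurable Mw"
    and weighted_int: "integrable M (\<lambda>\<omega>. A \<omega> * (\<phi> (W \<omega>) * (1 / g1 (W \<omega>))))"
  shows "(\<integral>\<omega>. A \<omega> * (\<phi> (W \<omega>) * (1 / g1 (W \<omega>))) \<partial>M) = (\<integral>\<omega>. \<phi> (W \<omega>) \<partial>M)"
proof -
  have "(\<integral>\<omega>. A \<omega> * (\<phi> (W \<omega>) * (1 / g1 (W \<omega>))) \<partial>M)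
      = (\<integral>\<omega>. g (W \<omega>) * (\<phi> (W \<omega>) * (1 / g1 (W \<omega>))) \<partial>M)"
    using regr_integral_mult(2)[OF W_measurable propensity A_measurable,
        where \<phi>="\<lambda>w. \<phi> w * (1 / g1 w)", OF _ weighted_int] by simp
  also have "\<dots> = (\<integral>\<omega>. \<phi> (W \<omega>) \<partial>M)"
  proof (rule integral_cong_AE)
    show "AE \<omega> in M. g (W \<omega>) * (\<phi> (W \<omega>) * (1 / g1 (W \<omega>))) = \<phi> (W \<omega>)"
      using g1_eq_g AE_space
    proof eventually_elim
      case (elim \<omega>)
      then have "g1 (W \<omega>) \<noteq> 0"
        using g1_W_bounds \<epsilon>1_pos by force
      with elim(1) show ?case
        by simp
    qed
  qed measurable
  finally show ?thesis .
qed

lemma ipw_residual_integral: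
  assumes g1_eq_g: "AE \<omega> in M. g1 (W \<omega>) = g (W \<omega>)"
  shows "(\<integral>\<omega>. A \<omega> * ((Y \<omega> - m1 (W \<omega>)) * (1 / g1 (W \<omega>))) \<partial>M)
    = (\<integral>\<omega>. m (W \<omega>) \<partial>M) - (\<integral>\<omega>. m1 (W \<omega>) \<partial>M)"
proof -
  have Y_int: "integrable M (\<lambda>\<omega>. A \<omega> * (Y \<omega> * (1 / g1 (W \<omega>))))"
    using integrable_treated_weighted[where \<phi>="\<lambda>w. 1 / g1 w", OF _ _ _ inverse_g1_bound] Y_bounds
    by simp
  have m1_int: "integrable M (\<lambda>\<omega>. A \<omega> * (m1 (W \<omega>) * (1 / g1 (W \<omega>))))"
    using integrable_treated_weighted[where \<phi>="\<lambda>w. 1 / g1 w", OF _ _ _ inverse_g1_bound] m1_W_bounds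
    by simp
  note outcome_step = regr_treated_integral_mult[OF W_measurable outcome Y_measurable,
      where \<phi>="\<lambda>w. 1 / g1 w", OF _ Y_int]
  have "(\<integral>\<omega>. A \<omega> * ((Y \<omega> - m1 (W \<omega>)) * (1 / g1 (W \<omega>))) \<partial>M)
      = (\<integral>\<omega>. A \<omega> * (Y \<omega> * (1 / g1 (W \<omega>))) - A \<omega> * (m1 (W \<omega>) * (1 / g1 (W \<omega>))) \<partial>M)"
    by (simp add: algebra_simps)
  also have "\<dots> = (\<integral>\<omega>. A \<omega> * (m (W \<omega>) * (1 / g1 (W \<omega>))) \<partial>M)
      - (\<integral>\<omega>. A \<omega> * (m1 (W \<omega>) * (1 / g1 (W \<omega>))) \<partial>M)"
    using Y_int m1_int outcome_step(2) by simp
  also have "\<dots> = (\<integral>\<omega>. m (W \<omega>) \<partial>M) - (\<integral>\<omega>. m1 (W \<omega>) \<partial>M)"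
    using ipw_integral[OF g1_eq_g _ outcome_step(1)] ipw_integral[OF g1_eq_g _ m1_int] by simp
  finally show ?thesis .
qed

lemma outcome_weighted_residual:
  fixes \<phi> :: "'w \<Rightarrow> real"
  assumes m1_eq_m: "AE \<omega> in M. m1 (W \<omega>) = m (W \<omega>)"
    and [measurable]: "\<phi> \<in> borel_measurable Mw" and \<phi>_bound: "AE \<omega> in M. \<bar>\<phi> (W \<omega>)\<bar> \<le> B"
  shows "(\<integral>\<omega>. A \<omega> * ((Y \<omega> - m1 (W \<omega>)) * \<phi> (W \<omega>)) \<partial>M) = 0"
proof -
  have Y_int: "integrable M (\<lambda>\<omega>. A \<omega> * (Y \<omega> * \<phi> (W \<omega>)))"
    using integrable_treated_weighted[OF _ _ _ \<phi>_bound] Y_bounds by simp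
  have m1_int: "integrable M (\<lambda>\<omega>. A \<omega> * (m1 (W \<omega>) * \<phi> (W \<omega>)))"
    using integrable_treated_weighted[OF _ _ _ \<phi>_bound] m1_W_bounds by simp
  have "(\<integral>\<omega>. A \<omega> * ((Y \<omega> - m1 (W \<omega>)) * \<phi> (W \<omega>)) \<partial>M)
      = (\<integral>\<omega>. A \<omega> * (Y \<omega> * \<phi> (W \<omega>)) - A \<omega> * (m1 (W \<omega>) * \<phi> (W \<omega>)) \<partial>M)"
    by (simp add: algebra_simps)
  also have "\<dots> = (\<integral>\<omega>. A \<omega> * (m (W \<omega>) * \<phi> (W \<omega>)) \<partial>M) - (\<integral>\<omega>. A \<omega> * (m1 (W \<omega>) * \<phi> (W \<omega>)) \<partial>M)"
    using Y_int m1_int regr_treated_integral_mult(2)[OF W_measurable outcome Y_measurable _ Y_int] by simp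
  also have "(\<integral>\<omega>. A \<omega> * (m (W \<omega>) * \<phi> (W \<omega>)) \<partial>M) = (\<integral>\<omega>. A \<omega> * (m1 (W \<omega>) * \<phi> (W \<omega>)) \<partial>M)"
    by (rule integral_cong_AE) (use m1_eq_m in \<open>auto elim!: AE_mp\<close>)
  finally show ?thesis
    by simp
qed

lemma e_score_weighted_residual_integral:
  assumes "(AE \<omega> in M. g1 (W \<omega>) = g (W \<omega>)) \<or> (AE \<omega> in M. m1 (W \<omega>) = m (W \<omega>))"
  shows "(\<integral>\<omega>. A \<omega> * ((Y \<omega> - m1 (W \<omega>)) * (1 / k (h (g1 (W \<omega>))))) \<partial>M)
    = (\<integral>\<omega>. m (W \<omega>) \<partial>M) - (\<integral>\<omega>. m1 (W \<omega>) \<partial>M)"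
  using assms
proof
  assume g1_eq_g: "AE \<omega> in M. g1 (W \<omega>) = g (W \<omega>)"
  show ?thesis
    using e_score_weighted_residual[OF g1_eq_g] ipw_weighted_residual[OF g1_eq_g]
      ipw_residual_integral[OF g1_eq_g] by simp
next
  assume m1_eq_m: "AE \<omega> in M. m1 (W \<omega>) = m (W \<omega>)"
  have "(\<integral>\<omega>. m (W \<omega>) \<partial>M) = (\<integral>\<omega>. m1 (W \<omega>) \<partial>M)"
    by (rule integral_cong_AE) (use m1_eq_m in \<open>auto elim!: AE_mp\<close>)
  then show ?thesis
    using outcome_weighted_residual[OF m1_eq_m, where \<phi>="\<lambda>w. 1 / k (h (g1 w))", OF _ inverse_e_score_bound]
    by simp
qed

end

theorem theorem2:
  fixes M :: "'o measure" and Mw :: "'w measure"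
    and W :: "'o \<Rightarrow> 'w" and A Y :: "'o \<Rightarrow> real"
    and g m g1 m1 :: "'w \<Rightarrow> real" and h k :: "real \<Rightarrow> real"
    and \<epsilon> \<epsilon>1 \<theta> :: real
  assumes P: "prob_space M"
    and W_meas: "W \<in> measurable M Mw"
    and A_meas: "A \<in> borel_measurable M" and A_vals: "\<forall>\<omega>\<in>space M. A \<omega> \<in> {0, 1}"
    and Y_meas: "Y \<in> borel_measurable M" and Y_vals: "\<forall>\<omega>\<in>space M. 0 \<le> Y \<omega> \<and> Y \<omega> \<le> 1"
    \<comment> \<open>propensity score g(w) = P(A=1 | W=w)\<close>
    and g_def: "regr M W Mw A g"
    \<comment> \<open>outcome regression m(w) = E(Y | A=1, W=w)\<close>
    and m_def: "regr (restrict_space M {\<omega>\<in>space M. A \<omega> = 1}) W Mw Y m"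
    and theta_def: "\<theta> = integral\<^sup>L M (\<lambda>\<omega>. m (W \<omega>))"
    and eps_pos: "\<epsilon> > 0" and positivity: "AE \<omega> in M. g (W \<omega>) > \<epsilon>"
    and g1_meas: "g1 \<in> borel_measurable Mw"
    and eps1_pos: "\<epsilon>1 > 0" and g1_vals: "\<forall>w\<in>space Mw. \<epsilon>1 \<le> g1 w \<and> g1 w \<le> 1"
    and m1_meas: "m1 \<in> borel_measurable Mw"
    and m1_vals: "\<forall>w\<in>space Mw. 0 \<le> m1 w \<and> m1 w \<le> 1"
    and dr: "(AE \<omega> in M. g1 (W \<omega>) = g (W \<omega>)) \<or> (AE \<omega> in M. m1 (W \<omega>) = m (W \<omega>))"
    \<comment> \<open>r1(w) = h(g1(w)) with h(t) = E(Y - m1(W) | A=1, g1(W)=t)\<close>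
    and h_def: "regr (restrict_space M {\<omega>\<in>space M. A \<omega> = 1}) (\<lambda>\<omega>. g1 (W \<omega>)) borel
                  (\<lambda>\<omega>. Y \<omega> - m1 (W \<omega>)) h"
    \<comment> \<open>e1(w) = k(r1(w)) with k(s) = E(g1(W) | r1(W)=s)\<close>
    and k_def: "regr M (\<lambda>\<omega>. h (g1 (W \<omega>))) borel (\<lambda>\<omega>. g1 (W \<omega>)) k"
  shows "integrable M (\<lambda>\<omega>. A \<omega> / k (h (g1 (W \<omega>))) * (Y \<omega> - m1 (W \<omega>)) + m1 (W \<omega>) - \<theta>)
     \<and> integral\<^sup>L M (\<lambda>\<omega>. A \<omega> / k (h (g1 (W \<omega>))) * (Y \<omega> - m1 (W \<omega>)) + m1 (W \<omega>) - \<theta>) = 0"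
proof -
  have "e_score_model M Mw W A Y g m g1 m1 h k \<epsilon>1"
    using assms by (simp add: e_score_model_def e_score_model_axioms_def
        treatment_model_def treatment_model_axioms_def)
  then interpret e_score_model M Mw W A Y g m g1 m1 h k \<epsilon>1 .
  have weighted_int: "integrable M (\<lambda>\<omega>. A \<omega> * ((Y \<omega> - m1 (W \<omega>)) * (1 / k (h (g1 (W \<omega>))))))"
    using integrable_treated_weighted[where \<phi>="\<lambda>w. 1 / k (h (g1 w))", OF _ _ _ inverse_e_score_bound]
      residual_abs_le_1 by simp
  have m1_int: "integrable M (\<lambda>\<omega>. m1 (W \<omega>))"
    by (rule integrable_const_bound[where B=1]) (use m1_W_bounds in auto)
  have "(\<lambda>\<omega>. A \<omega> / k (h (g1 (W \<omega>))) * (Y \<omega> - m1 (W \<omega>)) + m1 (W \<omega>) - \<theta>)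
      = (\<lambda>\<omega>. A \<omega> * ((Y \<omega> - m1 (W \<omega>)) * (1 / k (h (g1 (W \<omega>))))) + m1 (W \<omega>) - \<theta>)"
    by simp
  then show ?thesis
    using weighted_int m1_int e_score_weighted_residual_integral[OF dr] theta_def
    by (simp add: prob_space)
qed

end
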